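(* Let $\Lambda\subseteq\mathbb Z^D$ be a lattice that induces a lattice tiling of the shape $\mathcal S$, and let $\delta=(d_1,\dots,d_D)$ be a nonzero ternary vector. Then $(\Lambda,\mathcal S,\delta)$ defines a folding if and only if both of the following hold: <ul> <li>$|\mathcal S|\delta-c(|\mathcal S|\delta)=(0,\dots,0)$;</li> <li>for every integer $i$ with $0<i<|\mathcal S|$, $i\delta-c(i\delta)\neq(0,\dots,0)$.</li> </ul> Here $i\delta=(id_1,\dots,id_D)$.
   Context: Let $D\ge 1$. A shape is a finite nonempty set $\mathcal S\subset\mathbb Z^D$ containing the origin; the origin is its distinguished center point. A lattice is a set $\Lambda=\{\sum_{j=1}^D u_jv_j : u_1,\dots,u_D\in\mathbb Z\}$ for linearly independent $v_1,\dots,v_D\in\mathbb Z^D$. The $D\times D$ matrix $G$ whose rows are $v_1,\dots,v_D$ is a generator matrix of $\Lambda$. $\Lambda$ induces a lattice tiling of $\mathcal S$ if the translates $\mathcal S+\lambda$, $\lambda\in\Lambda$, are pairwise disjoint and cover $\mathbb Z^D$. The translate $\mathcal S+\lambda$ is called the copy of $\mathcal S$ with center $\lambda$. For $x\in\mathbb Z^D$, $c(x)$ denotes the unique $\lambda\in\Lambda$ with $x\in\mathcal S+\lambda$. A ternary vector (direction) is a nonzero $\delta\in\{-1,0,+1\}^D$. The folded-row of $(\Lambda,\mathcal S,\delta)$ is the sequence $p_0,p_1,p_2,\dots$ defined by $p_0=0$ and $p_{k+1}=(p_k+\delta)-c(p_k+\delta)$. Equivalently, $p_{k+1}=p_k+\delta$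 if $p_k+\delta\in\mathcal S$; otherwise $p_{k+1}$ is $p_k+\delta$ minus the center of the copy of $\mathcal S$ containing $p_k+\delta$. The triple $(\Lambda,\mathcal S,\delta)$ defines a folding if every element of $\mathcal S$ occurs in its folded-row. *)

theory Defs
  imports "HOL-Analysis.Analysis"
begin

text \<open>Points of Z^D are represented as int ^ 'n, the dimension D being CARD('n) (>= 1).\<close>

definition int_to_real_vec :: "int ^ 'n \<Rightarrow> real ^ 'n" where
  "int_to_real_vec x = (\<chi> i. real_of_int (x $ i))"

definition is_lattice :: "(int ^ 'n) set \<Rightarrow> bool" where
  "is_lattice L \<longleftrightarrow> (\<exists>v :: 'n \<Rightarrow> int ^ 'n.
      (\<forall>c :: 'n \<Rightarrow> real. (\<Sum>j\<in>UNIV. c j *\<^sub>R int_to_real_vec (v j)) = 0 \<longrightarrow> (\<forall>j. c j = 0)) \<and>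
      L = {x. \<exists>u :: 'n \<Rightarrow> int. x = (\<Sum>j\<in>UNIV. u j *s v j)})"

definition is_shape :: "(int ^ 'n) set \<Rightarrow> bool" where
  "is_shape S \<longleftrightarrow> finite S \<and> S \<noteq> {} \<and> 0 \<in> S"

definition lattice_tiling :: "(int ^ 'n) set \<Rightarrow> (int ^ 'n) set \<Rightarrow> bool" where
  "lattice_tiling L S \<longleftrightarrow>
     (\<forall>a\<in>L. \<forall>b\<in>L. a \<noteq> b \<longrightarrow> ((\<lambda>s. s + a) ` S) \<inter> ((\<lambda>s. s + b) ` S) = {}) \<and>
     (\<Union>a\<in>L. (\<lambda>s. s + a) ` S) = UNIV"

definition center :: "(int ^ 'n) set \<Rightarrow> (int ^ 'n) set \<Rightarrow> int ^ 'n \<Rightarrow> int ^ 'n" where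
  "center L S x = (THE a. a \<in> L \<and> x \<in> (\<lambda>s. s + a) ` S)"

definition ternary :: "int ^ 'n \<Rightarrow> bool" where
  "ternary d \<longleftrightarrow> d \<noteq> 0 \<and> (\<forall>k. d $ k \<in> {-1, 0, 1})"

fun folded_row :: "(int ^ 'n) set \<Rightarrow> (int ^ 'n) set \<Rightarrow> int ^ 'n \<Rightarrow> nat \<Rightarrow> int ^ 'n" where
  "folded_row L S d 0 = 0"
| "folded_row L S d (Suc k) =
     (folded_row L S d k + d) - center L S (folded_row L S d k + d)"

definition defines_folding :: "(int ^ 'n) set \<Rightarrow> (int ^ 'n) set \<Rightarrow> int ^ 'n \<Rightarrow> bool" where
  "defines_folding L S d \<longleftrightarrow> S \<subseteq> range (folded_row L S d)"

end

theory Submission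
  imports Defs
begin

(* For a lattice tiling of S by L, write  r x = x - c(x)  for the residue of x:
   the unique point of S congruent to x modulo L.  Then
     r x = r y  <->  x - y \<in> L,   and in particular  r x = 0 <-> x \<in> L,
   and the folded-row is  p_k = r (k*d)  (it is the orbit of 0 under "add d and reduce").
   Hence the folded-row is a sequence f in the finite set S satisfying the shift invariance
     f (j + k) = f j  <->  k*d \<in> L.
   A purely combinatorial lemma about such sequences finishes the proof: a sequence in a
   finite set S whose coincidences are governed by a predicate Z on the shift covers S iff
   Z |S| holds and Z fails on 0 < k < |S|.  (If a shift k < |S| were a coincidence, f would be
   k-periodic and take at most k values; if no shift up to |S| were, f would be injective on
   |S|+1 indices.)  The file first proves this combinatorial lemma, then the closure
   properties of lattices, then the residue calculus of a tiling, and finally the theorem.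
   The argument works for every direction d. *)

lemma periodic_range:
  fixes f :: "nat \<Rightarrow> 'a"
  assumes "0 < k" and period: "\<And>j. f (j + k) = f j"
  shows "range f = f ` {..<k}"
proof -
  have shift: "f (i + q * k) = f i" for i q
  proof (induction q)
    case (Suc q)
    have "f (i + Suc q * k) = f (i + q * k + k)" by (simp add: algebra_simps)
    with Suc show ?case by (simp add: period)
  qed simp
  have "f j \<in> f ` {..<k}" for j
  proof -
    have "f j = f (j mod k)"
      using shift[of "j mod k" "j div k"] by (simp add: mod_div_mult_eq)
    moreover have "j mod k < k" using \<open>0 < k\<close> by simp
    ultimately show ?thesis by blast
  qed
  then show ?thesis by blast
qed

lemma injective_window:
  fixes f :: "nat \<Rightarrow> 'a"
  assumes "\<And>j k. 0 < k \<Longrightarrow> k < n \<Longrightarrow> f (j + k) \<noteq> f j"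
  shows "inj_on f {..<n}"
proof (rule linorder_inj_onI')
  fix i j assume "i \<in> {..<n}" "j \<in> {..<n}" "i < j"
  then have "f (i + (j - i)) \<noteq> f i"
    using assms[of "j - i" i] by simp
  with \<open>i < j\<close> show "f i \<noteq> f j" by simp
qed

lemma shift_invariant_cover:
  fixes f :: "nat \<Rightarrow> 'a" and Z :: "nat \<Rightarrow> bool"
  assumes fin: "finite S" and into: "range f \<subseteq> S"
    and coincide: "\<And>j k. f (j + k) = f j \<longleftrightarrow> Z k"
  shows "S \<subseteq> range f \<longleftrightarrow> Z (card S) \<and> (\<forall>k. 0 < k \<and> k < card S \<longrightarrow> \<not> Z k)"
proof
  assume cover: "S \<subseteq> range f"
  have no_short_period: "\<not> Z k" if "0 < k" "k < card S" for k
  proof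
    assume "Z k"
    then have "range f = f ` {..<k}"
      using periodic_range[OF \<open>0 < k\<close>] coincide by blast
    then have "card S \<le> card (f ` {..<k})"
      using cover by (intro card_mono) auto
    also have "\<dots> \<le> k"
      using card_image_le[of "{..<k}" f] by simp
    finally show False using \<open>k < card S\<close> by simp
  qed
  moreover have "Z (card S)"
  proof (rule ccontr)
    assume "\<not> Z (card S)"
    then have "inj_on f {..<Suc (card S)}"
      using no_short_period coincide by (intro injective_window) (metis less_Suc_eq)
    then have "card {..<Suc (card S)} \<le> card S"
      using into fin by (intro card_inj_on_le) auto
    then show False by simp
  qed
  ultimately show "Z (card S) \<and> (\<forall>k. 0 < k \<and> k < card S \<longrightarrow> \<not> Z k)" by blast
next
  assume "Z (card S) \<and> (\<forall>k. 0 < k \<and> k < card S \<longrightarrow> \<not> Z k)"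
  then have "inj_on f {..<card S}"
    using coincide by (intro injective_window) blast
  then have "card (f ` {..<card S}) = card S"
    by (simp add: card_image)
  then have "f ` {..<card S} = S"
    using into fin by (intro card_subset_eq) auto
  then show "S \<subseteq> range f" by blast
qed

lemma lattice_zero:
  fixes L :: "(int ^ 'n) set"
  assumes "is_lattice L"
  shows "0 \<in> L"
proof -
  obtain v :: "'n \<Rightarrow> int ^ 'n" where "L = {x. \<exists>u. x = (\<Sum>j\<in>UNIV. u j *s v j)}"
    using assms unfolding is_lattice_def by blast
  then show ?thesis by (auto intro!: exI[of _ "\<lambda>_. 0"] simp: vec_eq_iff)
qed

lemma lattice_diff:
  fixes L :: "(int ^ 'n) set"
  assumes "is_lattice L" "x \<in> L" "y \<in> L"
  shows "x - y \<in> L"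
proof -
  obtain v :: "'n \<Rightarrow> int ^ 'n" where L: "L = {x. \<exists>u. x = (\<Sum>j\<in>UNIV. u j *s v j)}"
    using assms(1) unfolding is_lattice_def by blast
  obtain u w where x: "x = (\<Sum>j\<in>UNIV. u j *s v j)" and y: "y = (\<Sum>j\<in>UNIV. w j *s v j)"
    using assms(2,3) L by blast
  have "x - y = (\<Sum>j\<in>UNIV. (u j - w j) *s v j)"
    unfolding x y by (simp add: vec_eq_iff sum_subtractf algebra_simps)
  then show ?thesis unfolding L by (intro CollectI exI)
qed

lemma lattice_add:
  fixes L :: "(int ^ 'n) set"
  assumes "is_lattice L" "x \<in> L" "y \<in> L"
  shows "x + y \<in> L"
proof -
  have "0 - y \<in> L" using assms lattice_zero lattice_diff by blast
  then have "x - (0 - y) \<in> L" using assms lattice_diff by blast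
  then show ?thesis by simp
qed

lemma center_eqI:
  assumes tiling: "lattice_tiling L S" and "a \<in> L" "x - a \<in> S"
  shows "center L S x = a"
  unfolding center_def
proof (rule the_equality)
  have x_in_copy: "x \<in> (\<lambda>s. s + a) ` S"
    using \<open>x - a \<in> S\<close> by (auto intro!: image_eqI[where x = "x - a"])
  then show "a \<in> L \<and> x \<in> (\<lambda>s. s + a) ` S" using \<open>a \<in> L\<close> by blast
  fix b assume b: "b \<in> L \<and> x \<in> (\<lambda>s. s + b) ` S"
  with x_in_copy \<open>a \<in> L\<close> tiling show "b = a"
    unfolding lattice_tiling_def by blast
qed

lemma center_mem:
  assumes tiling: "lattice_tiling L S"
  shows "center L S x \<in> L" and "x - center L S x \<in> S"
proof -
  have "x \<in> (\<Union>a\<in>L. (\<lambda>s. s + a) ` S)"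
    using tiling unfolding lattice_tiling_def by simp
  then obtain a s where "a \<in> L" "s \<in> S" "x = s + a" by blast
  then have "center L S x = a"
    by (intro center_eqI[OF tiling]) auto
  with \<open>a \<in> L\<close> \<open>s \<in> S\<close> \<open>x = s + a\<close>
  show "center L S x \<in> L" and "x - center L S x \<in> S" by auto
qed

definition residue :: "(int ^ 'n) set \<Rightarrow> (int ^ 'n) set \<Rightarrow> int ^ 'n \<Rightarrow> int ^ 'n" where
  "residue L S x = x - center L S x"

lemma residue_eq_iff:
  assumes lat: "is_lattice L" and tiling: "lattice_tiling L S"
  shows "residue L S x = residue L S y \<longleftrightarrow> x - y \<in> L"
proof
  assume "residue L S x = residue L S y"
  then have "x - y = center L S x - center L S y"
    unfolding residue_def by (simp add: algebra_simps)
  then show "x - y \<in> L"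
    using lattice_diff[OF lat center_mem(1)[OF tiling] center_mem(1)[OF tiling]] by simp
next
  assume "x - y \<in> L"
  define a where "a = (x - y) + center L S y"
  have "a \<in> L"
    unfolding a_def using lattice_add[OF lat \<open>x - y \<in> L\<close> center_mem(1)[OF tiling]] .
  moreover have "x - a = residue L S y"
    unfolding a_def residue_def by simp
  ultimately have "center L S x = a"
    using center_eqI[OF tiling] center_mem(2)[OF tiling, of y] by (simp add: residue_def)
  with \<open>x - a = residue L S y\<close> show "residue L S x = residue L S y"
    unfolding residue_def by simp
qed

text \<open>Since the shape contains the origin, the residue vanishes exactly on the lattice.\<close>
lemma residue_zero_iff:
  assumes lat: "is_lattice L" and shape: "is_shape S" and tiling: "lattice_tiling L S"
  shows "residue L S x = 0 \<longleftrightarrow> x \<in> L"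
proof
  assume "residue L S x = 0"
  then have "x = center L S x" unfolding residue_def by simp
  then show "x \<in> L" using center_mem(1)[OF tiling] by metis
next
  assume "x \<in> L"
  moreover have "x - x \<in> S" using shape unfolding is_shape_def by simp
  ultimately have "center L S x = x" by (rule center_eqI[OF tiling])
  then show "residue L S x = 0" unfolding residue_def by simp
qed

lemma folded_row_residue:
  assumes lat: "is_lattice L" and shape: "is_shape S" and tiling: "lattice_tiling L S"
  shows "folded_row L S d k = residue L S (int k *s d)"
proof (induction k)
  case 0
  show ?case using residue_zero_iff[OF assms] lattice_zero[OF lat] by simp
next
  case (Suc k)
  have "residue L S (int k *s d) + d - int (Suc k) *s d = - center L S (int k *s d)"
    unfolding residue_def by (simp add: vec_eq_iff algebra_simps)
  moreover have "- center L S (int k *s d) \<in> L"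
    using lattice_diff[OF lat lattice_zero[OF lat] center_mem(1)[OF tiling]] by simp
  ultimately have "residue L S (residue L S (int k *s d) + d) = residue L S (int (Suc k) *s d)"
    using residue_eq_iff[OF lat tiling] by simp
  then show ?case using Suc by (simp add: residue_def)
qed

lemma residue_multiple_shift:
  assumes lat: "is_lattice L" and tiling: "lattice_tiling L S"
  shows "residue L S (int (j + k) *s d) = residue L S (int j *s d) \<longleftrightarrow> int k *s d \<in> L"
proof -
  have "int (j + k) *s d - int j *s d = int k *s d"
    by (simp add: vec_eq_iff algebra_simps)
  then show ?thesis using residue_eq_iff[OF lat tiling] by simp
qed

theorem lemma3:
  fixes L S :: "(int ^ 'n) set" and d :: "int ^ 'n"
  assumes "is_lattice L" and "is_shape S" and "lattice_tiling L S" and "ternary d"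
  shows "defines_folding L S d \<longleftrightarrow>
    ((int (card S) *s d) - center L S (int (card S) *s d) = 0 \<and>
     (\<forall>i::int. 0 < i \<and> i < int (card S) \<longrightarrow> (i *s d) - center L S (i *s d) \<noteq> 0))"
proof -
  let ?f = "\<lambda>k. residue L S (int k *s d)" and ?Z = "\<lambda>k::nat. int k *s d \<in> L"
  have row: "range (folded_row L S d) = range ?f"
    using folded_row_residue[OF assms(1-3)] by simp
  have into: "range ?f \<subseteq> S"
    using center_mem(2)[OF assms(3)] by (auto simp: residue_def)
  have vanish: "(x - center L S x = 0) = (x \<in> L)" for x
    using residue_zero_iff[OF assms(1-3)] by (simp add: residue_def)
  have nat_range: "(\<forall>i::int. 0 < i \<and> i < int (card S) \<longrightarrow> i *s d \<notin> L) \<longleftrightarrow>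
                   (\<forall>k. 0 < k \<and> k < card S \<longrightarrow> \<not> ?Z k)"
    by (metis of_nat_0_less_iff of_nat_less_iff pos_int_cases)
  have "defines_folding L S d \<longleftrightarrow> ?Z (card S) \<and> (\<forall>k. 0 < k \<and> k < card S \<longrightarrow> \<not> ?Z k)"
    unfolding defines_folding_def row
    using assms(2) into residue_multiple_shift[OF assms(1,3)]
    by (intro shift_invariant_cover) (auto simp: is_shape_def)
  then show ?thesis unfolding vanish nat_range by simp
qed

end
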